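(* Let $G$ be a modular noetherian right $\ell$-group with strong order unit $s$ and degree homomorphism $\deg$. Let $g \in G^-$. Let $g = g_k g_{k-1}\cdots g_1$ be its right-normal factorization and $g = h_1 \cdots h_{k-1} h_k$ its left-normal factorization. Then $\deg(h_i) = \deg(g_i)$ for all $1 \leq i \leq k$.
   Context: A right $\ell$-group is a group $G$ (identity $e$) with a right-invariant partial order making $G$ a lattice. It is modular if the lattice is modular. It is noetherian if for each $g$ the set $\{h \geq g\}$ satisfies the descending chain condition and the set $\{h \leq g\}$ satisfies the ascending chain condition. $G^- = \{g \leq e\}$ and $[a,b] = \{x : a \leq x \leq b\}$. A strong order unit is an element $s > e$ such that $x \mapsto sx$ is a lattice automorphism and every $g$ satisfies $g \leq s^k$ for some $k \in \mathbb{Z}$. $\deg : G \to \mathbb{Z}$ is the unique group homomorphism sending $g \in G^-$ to the common length of its factorizations into elements covered by $e$. A right-normal factorization of $g \in G^-$ is a sequence $g_1,\dots,g_k \in [s^{-1},e] \setminus \{e\}$ with $g = g_k\cdots g_1$ such that, for each $1 \leq i < k$, there are no $h,h' \in G^-$ with $h \neq e$, $h'h = g_{i+1}$, $hg_i \in [s^{-1},e]$. A left-normal factorization of $g$ is a sequence $h_1,\dots,h_k \in [s^{-1},e]\setminus\{e\}$ with $g = h_1\cdots h_k$ such that, for each $1 \leq i < k$, there are no $h,h' \in G^-$ with $h \neq e$, $hh' = h_{i+1}$, $h_i h \in [s^{-1},e]$. Each $g \in G^-$ has a unique right-normal and a unique left-normal factorization, and both have the same number of factors. *)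

theory Defs
  imports "HOL-Algebra.Group"
begin

definition is_sup :: "('a \<Rightarrow> 'a \<Rightarrow> bool) \<Rightarrow> 'a set \<Rightarrow> 'a \<Rightarrow> 'a \<Rightarrow> 'a \<Rightarrow> bool" where
  "is_sup leq A x y j \<longleftrightarrow> j \<in> A \<and> leq x j \<and> leq y j \<and> (\<forall>u\<in>A. leq x u \<longrightarrow> leq y u \<longrightarrow> leq j u)"

definition is_inf :: "('a \<Rightarrow> 'a \<Rightarrow> bool) \<Rightarrow> 'a set \<Rightarrow> 'a \<Rightarrow> 'a \<Rightarrow> 'a \<Rightarrow> bool" where
  "is_inf leq A x y m \<longleftrightarrow> m \<in> A \<and> leq m x \<and> leq m y \<and> (\<forall>u\<in>A. leq u x \<longrightarrow> leq u y \<longrightarrow> leq u m)"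

definition right_l_group :: "('a, 'b) monoid_scheme \<Rightarrow> ('a \<Rightarrow> 'a \<Rightarrow> bool) \<Rightarrow> bool" where
  "right_l_group G leq \<longleftrightarrow> group G
     \<and> (\<forall>x\<in>carrier G. leq x x)
     \<and> (\<forall>x\<in>carrier G. \<forall>y\<in>carrier G. leq x y \<longrightarrow> leq y x \<longrightarrow> x = y)
     \<and> (\<forall>x\<in>carrier G. \<forall>y\<in>carrier G. \<forall>z\<in>carrier G. leq x y \<longrightarrow> leq y z \<longrightarrow> leq x z)
     \<and> (\<forall>x\<in>carrier G. \<forall>y\<in>carrier G. \<forall>z\<in>carrier G. leq x y \<longrightarrow> leq (x \<otimes>\<^bsub>G\<^esub> z) (y \<otimes>\<^bsub>G\<^esub> z))
     \<and> (\<forall>x\<in>carrier G. \<forall>y\<in>carrier G. (\<exists>j. is_sup leq (carrier G) x y j) \<and> (\<exists>m. is_inf leq (carrier G) x y m))"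

definition modular_lattice :: "'a set \<Rightarrow> ('a \<Rightarrow> 'a \<Rightarrow> bool) \<Rightarrow> bool" where
  "modular_lattice A leq \<longleftrightarrow> (\<forall>x\<in>A. \<forall>y\<in>A. \<forall>z\<in>A. leq x z \<longrightarrow>
     (\<forall>m j j' m'. is_inf leq A y z m \<longrightarrow> is_sup leq A x m j \<longrightarrow>
        is_sup leq A x y j' \<longrightarrow> is_inf leq A j' z m' \<longrightarrow> j = m'))"

definition strict :: "('a \<Rightarrow> 'a \<Rightarrow> bool) \<Rightarrow> 'a \<Rightarrow> 'a \<Rightarrow> bool" where
  "strict leq x y \<longleftrightarrow> leq x y \<and> x \<noteq> y"

definition noetherian :: "'a set \<Rightarrow> ('a \<Rightarrow> 'a \<Rightarrow> bool) \<Rightarrow> bool" where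
  "noetherian A leq \<longleftrightarrow> (\<forall>g\<in>A.
     (\<nexists>f::nat \<Rightarrow> 'a. (\<forall>n. f n \<in> A \<and> leq g (f n) \<and> strict leq (f (Suc n)) (f n)))
   \<and> (\<nexists>f::nat \<Rightarrow> 'a. (\<forall>n. f n \<in> A \<and> leq (f n) g \<and> strict leq (f n) (f (Suc n)))))"

definition strong_order_unit :: "('a, 'b) monoid_scheme \<Rightarrow> ('a \<Rightarrow> 'a \<Rightarrow> bool) \<Rightarrow> 'a \<Rightarrow> bool" where
  "strong_order_unit G leq s \<longleftrightarrow> s \<in> carrier G \<and> strict leq \<one>\<^bsub>G\<^esub> s
     \<and> bij_betw (\<lambda>x. s \<otimes>\<^bsub>G\<^esub> x) (carrier G) (carrier G)
     \<and> (\<forall>x\<in>carrier G. \<forall>y\<in>carrier G. \<forall>j. is_sup leq (carrier G) x y j \<longrightarrow>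
          is_sup leq (carrier G) (s \<otimes>\<^bsub>G\<^esub> x) (s \<otimes>\<^bsub>G\<^esub> y) (s \<otimes>\<^bsub>G\<^esub> j))
     \<and> (\<forall>x\<in>carrier G. \<forall>y\<in>carrier G. \<forall>m. is_inf leq (carrier G) x y m \<longrightarrow>
          is_inf leq (carrier G) (s \<otimes>\<^bsub>G\<^esub> x) (s \<otimes>\<^bsub>G\<^esub> y) (s \<otimes>\<^bsub>G\<^esub> m))
     \<and> (\<forall>g\<in>carrier G. \<exists>k::int. leq g (s [^]\<^bsub>G\<^esub> k))"

definition neg_cone :: "('a, 'b) monoid_scheme \<Rightarrow> ('a \<Rightarrow> 'a \<Rightarrow> bool) \<Rightarrow> 'a set" where
  "neg_cone G leq = {g \<in> carrier G. leq g \<one>\<^bsub>G\<^esub>}"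

definition ointerval :: "('a, 'b) monoid_scheme \<Rightarrow> ('a \<Rightarrow> 'a \<Rightarrow> bool) \<Rightarrow> 'a \<Rightarrow> 'a \<Rightarrow> 'a set" where
  "ointerval G leq a b = {x \<in> carrier G. leq a x \<and> leq x b}"

definition covered_by_one :: "('a, 'b) monoid_scheme \<Rightarrow> ('a \<Rightarrow> 'a \<Rightarrow> bool) \<Rightarrow> 'a \<Rightarrow> bool" where
  "covered_by_one G leq a \<longleftrightarrow> a \<in> carrier G \<and> strict leq a \<one>\<^bsub>G\<^esub>
     \<and> (\<nexists>x. x \<in> carrier G \<and> strict leq a x \<and> strict leq x \<one>\<^bsub>G\<^esub>)"

definition lprod :: "('a, 'b) monoid_scheme \<Rightarrow> 'a list \<Rightarrow> 'a" where
  "lprod G xs = foldr (\<lambda>x y. x \<otimes>\<^bsub>G\<^esub> y) xs \<one>\<^bsub>G\<^esub>"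

definition degree_hom :: "('a, 'b) monoid_scheme \<Rightarrow> ('a \<Rightarrow> 'a \<Rightarrow> bool) \<Rightarrow> ('a \<Rightarrow> int) \<Rightarrow> bool" where
  "degree_hom G leq deg \<longleftrightarrow>
     (\<forall>x\<in>carrier G. \<forall>y\<in>carrier G. deg (x \<otimes>\<^bsub>G\<^esub> y) = deg x + deg y)
   \<and> (\<forall>g\<in>neg_cone G leq. \<forall>xs. (\<forall>a\<in>set xs. covered_by_one G leq a) \<longrightarrow> lprod G xs = g
        \<longrightarrow> deg g = int (length xs))"

text \<open>Right-normal factorization: gs = [g1,...,gk] with g = gk ... g1.\<close>
definition right_normal_fact :: "('a, 'b) monoid_scheme \<Rightarrow> ('a \<Rightarrow> 'a \<Rightarrow> bool) \<Rightarrow> 'a \<Rightarrow> 'a \<Rightarrow> 'a list \<Rightarrow> bool" where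
  "right_normal_fact G leq s g gs \<longleftrightarrow>
     (\<forall>x\<in>set gs. x \<in> ointerval G leq (inv\<^bsub>G\<^esub> s) \<one>\<^bsub>G\<^esub> - {\<one>\<^bsub>G\<^esub>})
   \<and> g = lprod G (rev gs)
   \<and> (\<forall>i. Suc i < length gs \<longrightarrow> \<not> (\<exists>h\<in>neg_cone G leq. \<exists>h'\<in>neg_cone G leq.
        h \<noteq> \<one>\<^bsub>G\<^esub> \<and> h' \<otimes>\<^bsub>G\<^esub> h = gs ! (Suc i)
        \<and> h \<otimes>\<^bsub>G\<^esub> (gs ! i) \<in> ointerval G leq (inv\<^bsub>G\<^esub> s) \<one>\<^bsub>G\<^esub>))"

definition left_normal_fact :: "('a, 'b) monoid_scheme \<Rightarrow> ('a \<Rightarrow> 'a \<Rightarrow> bool) \<Rightarrow> 'a \<Rightarrow> 'a \<Rightarrow> 'a list \<Rightarrow> bool" where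
  "left_normal_fact G leq s g hs \<longleftrightarrow>
     (\<forall>x\<in>set hs. x \<in> ointerval G leq (inv\<^bsub>G\<^esub> s) \<one>\<^bsub>G\<^esub> - {\<one>\<^bsub>G\<^esub>})
   \<and> g = lprod G hs
   \<and> (\<forall>i. Suc i < length hs \<longrightarrow> \<not> (\<exists>h\<in>neg_cone G leq. \<exists>h'\<in>neg_cone G leq.
        h \<noteq> \<one>\<^bsub>G\<^esub> \<and> h \<otimes>\<^bsub>G\<^esub> h' = hs ! (Suc i)
        \<and> (hs ! i) \<otimes>\<^bsub>G\<^esub> h \<in> ointerval G leq (inv\<^bsub>G\<^esub> s) \<one>\<^bsub>G\<^esub>))"

end

theory Submission
  imports Defs
begin

text \<open>
  Normality of the two factorizations gives
  \<open>g \<or> s\<^sup>-\<^sup>1 = g\<^sub>1\<close> and \<open>s g \<and> e = h\<^sub>2 \<cdots> h\<^sub>k\<close>; iterating, \<open>x = s\<^sup>i g\<close> satisfies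
  \<open>x \<or> e = s\<^sup>i g\<^sub>i \<cdots> g\<^sub>1\<close> and \<open>x \<and> e = h\<^sub>i\<^sub>+\<^sub>1 \<cdots> h\<^sub>k\<close>.
  In a modular noetherian lattice covers are transported along joins, so the degree, which
  drops by one along every cover, is a valuation: \<open>deg (x \<or> y) + deg (x \<and> y) = deg x + deg y\<close>.
  With \<open>y = e\<close> this gives \<open>deg (g\<^sub>i \<cdots> g\<^sub>1) = deg g - deg (h\<^sub>i\<^sub>+\<^sub>1 \<cdots> h\<^sub>k) = deg (h\<^sub>1 \<cdots> h\<^sub>i)\<close>
  for every \<open>i\<close>, and comparing \<open>i\<close> with \<open>i + 1\<close> yields \<open>deg h\<^sub>i = deg g\<^sub>i\<close>.
\<close>

context monoid
begin

lemma lprod_Nil [simp]: "lprod G [] = \<one>"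
  by (simp add: lprod_def)

lemma lprod_Cons [simp]: "lprod G (x # xs) = x \<otimes> lprod G xs"
  by (simp add: lprod_def)

lemma lprod_closed [simp]: "set xs \<subseteq> carrier G \<Longrightarrow> lprod G xs \<in> carrier G"
  by (induction xs) auto

lemma lprod_append:
  "set xs \<subseteq> carrier G \<Longrightarrow> set ys \<subseteq> carrier G \<Longrightarrow> lprod G (xs @ ys) = lprod G xs \<otimes> lprod G ys"
  by (induction xs) (auto simp: m_assoc)

end

locale right_lgroup =
  fixes G :: "('a, 'b) monoid_scheme" (structure)
    and le :: "'a \<Rightarrow> 'a \<Rightarrow> bool" (infix "\<preceq>" 50)
  assumes right_l_group: "right_l_group G (\<preceq>)"
begin

sublocale group G
  using right_l_group by (simp add: right_l_group_def)

abbreviation lt :: "'a \<Rightarrow> 'a \<Rightarrow> bool" (infix "\<prec>" 50)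
  where "x \<prec> y \<equiv> strict (\<preceq>) x y"

lemma le_refl: "x \<in> carrier G \<Longrightarrow> x \<preceq> x"
  using right_l_group by (simp add: right_l_group_def)

lemma le_antisym: "\<lbrakk>x \<preceq> y; y \<preceq> x; x \<in> carrier G; y \<in> carrier G\<rbrakk> \<Longrightarrow> x = y"
  using right_l_group unfolding right_l_group_def by blast

lemma le_trans: "\<lbrakk>x \<preceq> y; y \<preceq> z; x \<in> carrier G; y \<in> carrier G; z \<in> carrier G\<rbrakk> \<Longrightarrow> x \<preceq> z"
  using right_l_group unfolding right_l_group_def by blast

lemma le_rmult: "\<lbrakk>x \<preceq> y; x \<in> carrier G; y \<in> carrier G; z \<in> carrier G\<rbrakk> \<Longrightarrow> x \<otimes> z \<preceq> y \<otimes> z"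
  using right_l_group unfolding right_l_group_def by blast

lemma le_rmult_iff:
  assumes "x \<in> carrier G" "y \<in> carrier G" "z \<in> carrier G"
  shows "x \<otimes> z \<preceq> y \<otimes> z \<longleftrightarrow> x \<preceq> y"
proof
  assume "x \<otimes> z \<preceq> y \<otimes> z"
  then have "x \<otimes> z \<otimes> inv z \<preceq> y \<otimes> z \<otimes> inv z"
    using assms by (simp add: le_rmult)
  then show "x \<preceq> y"
    using assms by (simp add: m_assoc)
next
  assume "x \<preceq> y"
  then show "x \<otimes> z \<preceq> y \<otimes> z"
    using assms by (rule le_rmult)
qed

lemma le_iff_le_one: "x \<in> carrier G \<Longrightarrow> y \<in> carrier G \<Longrightarrow> x \<preceq> y \<longleftrightarrow> x \<otimes> inv y \<preceq> \<one>"
  using le_rmult_iff[of x y "inv y"] by simp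

lemma neg_cone_mult:
  assumes "x \<in> neg_cone G (\<preceq>)" "y \<in> neg_cone G (\<preceq>)"
  shows "x \<otimes> y \<in> neg_cone G (\<preceq>)"
proof -
  have "x \<otimes> y \<preceq> \<one> \<otimes> y"
    by (rule le_rmult) (use assms in \<open>auto simp: neg_cone_def\<close>)
  then show ?thesis
    using assms le_trans[of "x \<otimes> y" y \<one>] by (simp add: neg_cone_def)
qed

lemma lprod_neg_cone: "set xs \<subseteq> neg_cone G (\<preceq>) \<Longrightarrow> lprod G xs \<in> neg_cone G (\<preceq>)"
proof (induction xs)
  case Nil
  then show ?case
    by (simp add: neg_cone_def le_refl)
qed (simp add: neg_cone_mult)

definition join :: "'a \<Rightarrow> 'a \<Rightarrow> 'a"
  where "join x y = (SOME j. is_sup (\<preceq>) (carrier G) x y j)"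

definition meet :: "'a \<Rightarrow> 'a \<Rightarrow> 'a"
  where "meet x y = (SOME m. is_inf (\<preceq>) (carrier G) x y m)"

lemma is_sup_join: "x \<in> carrier G \<Longrightarrow> y \<in> carrier G \<Longrightarrow> is_sup (\<preceq>) (carrier G) x y (join x y)"
  unfolding join_def using right_l_group unfolding right_l_group_def by (metis someI_ex)

lemma is_inf_meet: "x \<in> carrier G \<Longrightarrow> y \<in> carrier G \<Longrightarrow> is_inf (\<preceq>) (carrier G) x y (meet x y)"
  unfolding meet_def using right_l_group unfolding right_l_group_def by (metis someI_ex)

lemma join_closed [simp]: "x \<in> carrier G \<Longrightarrow> y \<in> carrier G \<Longrightarrow> join x y \<in> carrier G"
  using is_sup_join by (simp add: is_sup_def)

lemma join_upper1: "x \<in> carrier G \<Longrightarrow> y \<in> carrier G \<Longrightarrow> x \<preceq> join x y"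
  using is_sup_join by (simp add: is_sup_def)

lemma join_upper2: "x \<in> carrier G \<Longrightarrow> y \<in> carrier G \<Longrightarrow> y \<preceq> join x y"
  using is_sup_join by (simp add: is_sup_def)

lemma join_least:
  "\<lbrakk>x \<preceq> u; y \<preceq> u; x \<in> carrier G; y \<in> carrier G; u \<in> carrier G\<rbrakk> \<Longrightarrow> join x y \<preceq> u"
  using is_sup_join by (simp add: is_sup_def)

lemma meet_closed [simp]: "x \<in> carrier G \<Longrightarrow> y \<in> carrier G \<Longrightarrow> meet x y \<in> carrier G"
  using is_inf_meet by (simp add: is_inf_def)

lemma meet_lower1: "x \<in> carrier G \<Longrightarrow> y \<in> carrier G \<Longrightarrow> meet x y \<preceq> x"
  using is_inf_meet by (simp add: is_inf_def)

lemma meet_lower2: "x \<in> carrier G \<Longrightarrow> y \<in> carrier G \<Longrightarrow> meet x y \<preceq> y"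
  using is_inf_meet by (simp add: is_inf_def)

lemma meet_greatest:
  "\<lbrakk>u \<preceq> x; u \<preceq> y; x \<in> carrier G; y \<in> carrier G; u \<in> carrier G\<rbrakk> \<Longrightarrow> u \<preceq> meet x y"
  using is_inf_meet by (simp add: is_inf_def)

lemma is_sup_iff_eq_join:
  "x \<in> carrier G \<Longrightarrow> y \<in> carrier G \<Longrightarrow> is_sup (\<preceq>) (carrier G) x y j \<longleftrightarrow> j = join x y"
  using is_sup_join by (auto simp: is_sup_def intro: le_antisym)

lemma is_inf_iff_eq_meet:
  "x \<in> carrier G \<Longrightarrow> y \<in> carrier G \<Longrightarrow> is_inf (\<preceq>) (carrier G) x y m \<longleftrightarrow> m = meet x y"
  using is_inf_meet by (auto simp: is_inf_def intro: le_antisym)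

lemma join_eqI:
  assumes "x \<in> carrier G" "y \<in> carrier G" "j \<in> carrier G" "x \<preceq> j" "y \<preceq> j"
    and "\<And>u. \<lbrakk>u \<in> carrier G; x \<preceq> u; y \<preceq> u\<rbrakk> \<Longrightarrow> j \<preceq> u"
  shows "join x y = j"
  using assms is_sup_iff_eq_join[of x y j] by (simp add: is_sup_def)

lemma meet_eqI:
  assumes "x \<in> carrier G" "y \<in> carrier G" "m \<in> carrier G" "m \<preceq> x" "m \<preceq> y"
    and "\<And>u. \<lbrakk>u \<in> carrier G; u \<preceq> x; u \<preceq> y\<rbrakk> \<Longrightarrow> u \<preceq> m"
  shows "meet x y = m"
  using assms is_inf_iff_eq_meet[of x y m] by (simp add: is_inf_def)

lemma join_commute: "x \<in> carrier G \<Longrightarrow> y \<in> carrier G \<Longrightarrow> join x y = join y x"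
  by (rule join_eqI) (simp_all add: join_upper1 join_upper2 join_least)

lemma meet_commute: "x \<in> carrier G \<Longrightarrow> y \<in> carrier G \<Longrightarrow> meet x y = meet y x"
  by (rule meet_eqI) (simp_all add: meet_lower1 meet_lower2 meet_greatest)

lemma join_assoc:
  assumes "x \<in> carrier G" "y \<in> carrier G" "z \<in> carrier G"
  shows "join (join x y) z = join x (join y z)"
proof (rule join_eqI)
  let ?r = "join x (join y z)"
  have yz: "join y z \<preceq> ?r"
    using assms by (simp add: join_upper2)
  have "x \<preceq> ?r" "y \<preceq> ?r"
    using assms join_upper1 le_trans[OF join_upper1 yz] by simp_all
  then show "join x y \<preceq> ?r"
    using assms by (simp add: join_least)
  show "z \<preceq> ?r"
    using assms le_trans[OF join_upper2 yz] by simp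
next
  fix u assume u: "u \<in> carrier G" "join x y \<preceq> u" "z \<preceq> u"
  have "x \<preceq> u" "y \<preceq> u"
    using u assms le_trans[OF join_upper1 u(2)] le_trans[OF join_upper2 u(2)] by simp_all
  then show "join x (join y z) \<preceq> u"
    using u assms by (simp add: join_least)
qed (use assms in simp_all)

lemma meet_assoc:
  assumes "x \<in> carrier G" "y \<in> carrier G" "z \<in> carrier G"
  shows "meet (meet x y) z = meet x (meet y z)"
proof (rule meet_eqI)
  let ?r = "meet x (meet y z)"
  have yz: "?r \<preceq> meet y z"
    using assms by (simp add: meet_lower2)
  have "?r \<preceq> x" "?r \<preceq> y"
    using assms meet_lower1 le_trans[OF yz meet_lower1] by simp_all
  then show "?r \<preceq> meet x y"
    using assms by (simp add: meet_greatest)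
  show "?r \<preceq> z"
    using assms le_trans[OF yz meet_lower2] by simp
next
  fix u assume u: "u \<in> carrier G" "u \<preceq> meet x y" "u \<preceq> z"
  have "u \<preceq> x" "u \<preceq> y"
    using u assms le_trans[OF u(2) meet_lower1] le_trans[OF u(2) meet_lower2] by simp_all
  then show "u \<preceq> meet x (meet y z)"
    using u assms by (simp add: meet_greatest)
qed (use assms in simp_all)

lemma join_absorb1: "\<lbrakk>y \<preceq> x; x \<in> carrier G; y \<in> carrier G\<rbrakk> \<Longrightarrow> join x y = x"
  by (rule join_eqI) (simp_all add: le_refl)

lemma join_absorb2: "\<lbrakk>x \<preceq> y; x \<in> carrier G; y \<in> carrier G\<rbrakk> \<Longrightarrow> join x y = y"
  by (rule join_eqI) (simp_all add: le_refl)

lemma meet_absorb1: "\<lbrakk>x \<preceq> y; x \<in> carrier G; y \<in> carrier G\<rbrakk> \<Longrightarrow> meet x y = x"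
  by (rule meet_eqI) (simp_all add: le_refl)

lemma meet_absorb2: "\<lbrakk>y \<preceq> x; x \<in> carrier G; y \<in> carrier G\<rbrakk> \<Longrightarrow> meet x y = y"
  by (rule meet_eqI) (simp_all add: le_refl)

lemma le_iff_join: "x \<in> carrier G \<Longrightarrow> y \<in> carrier G \<Longrightarrow> x \<preceq> y \<longleftrightarrow> join x y = y"
  by (metis join_absorb2 join_upper1)

lemma join_rmult:
  assumes "x \<in> carrier G" "y \<in> carrier G" "z \<in> carrier G"
  shows "join (x \<otimes> z) (y \<otimes> z) = join x y \<otimes> z"
proof (rule join_eqI)
  fix u assume u: "u \<in> carrier G" "x \<otimes> z \<preceq> u" "y \<otimes> z \<preceq> u"
  have u_eq: "u = u \<otimes> inv z \<otimes> z"
    using u assms by (simp add: m_assoc)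
  have "x \<preceq> u \<otimes> inv z" "y \<preceq> u \<otimes> inv z"
    using u assms le_rmult_iff[of _ "u \<otimes> inv z" z] u_eq by auto
  then have "join x y \<preceq> u \<otimes> inv z"
    using assms u by (intro join_least) auto
  then show "join x y \<otimes> z \<preceq> u"
    using assms u le_rmult_iff[of "join x y" "u \<otimes> inv z" z] u_eq by auto
qed (use assms in \<open>auto intro: le_rmult join_upper1 join_upper2\<close>)

lemma meet_rmult:
  assumes "x \<in> carrier G" "y \<in> carrier G" "z \<in> carrier G"
  shows "meet (x \<otimes> z) (y \<otimes> z) = meet x y \<otimes> z"
proof (rule meet_eqI)
  fix u assume u: "u \<in> carrier G" "u \<preceq> x \<otimes> z" "u \<preceq> y \<otimes> z"
  have u_eq: "u = u \<otimes> inv z \<otimes> z"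
    using u assms by (simp add: m_assoc)
  have "u \<otimes> inv z \<preceq> x" "u \<otimes> inv z \<preceq> y"
    using u assms le_rmult_iff[of "u \<otimes> inv z" _ z] u_eq by auto
  then have "u \<otimes> inv z \<preceq> meet x y"
    using assms u by (intro meet_greatest) auto
  then show "u \<preceq> meet x y \<otimes> z"
    using assms u le_rmult_iff[of "u \<otimes> inv z" "meet x y" z] u_eq by auto
qed (use assms in \<open>auto intro: le_rmult meet_lower1 meet_lower2\<close>)

lemma join_rmult_join:
  assumes "x \<in> carrier G" "y \<in> carrier G" "b \<in> carrier G" "y \<otimes> b \<preceq> y"
  shows "join (join x y \<otimes> b) y = join (x \<otimes> b) y"
proof -
  have "join (join x y \<otimes> b) y = join (join (x \<otimes> b) (y \<otimes> b)) y"
    using assms by (simp add: join_rmult)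
  also have "\<dots> = join (x \<otimes> b) (join (y \<otimes> b) y)"
    using assms by (simp add: join_assoc)
  also have "join (y \<otimes> b) y = y"
    using assms by (simp add: join_absorb2)
  finally show ?thesis .
qed

lemma meet_one_rmult:
  assumes "x \<in> carrier G" "y \<in> carrier G" "c \<in> carrier G" "x \<otimes> c \<preceq> y" "meet y \<one> = c"
  shows "meet (x \<otimes> c) \<one> = meet x \<one> \<otimes> c"
proof -
  have "meet x \<one> \<otimes> c = meet (x \<otimes> c) (meet y \<one>)"
    using assms by (simp flip: meet_rmult)
  also have "\<dots> = meet (meet (x \<otimes> c) y) \<one>"
    using assms by (simp add: meet_assoc)
  also have "meet (x \<otimes> c) y = x \<otimes> c"
    using assms by (simp add: meet_absorb1)
  finally show ?thesis ..
qed

definition covered_by :: "'a \<Rightarrow> 'a \<Rightarrow> bool"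
  where "covered_by x y \<longleftrightarrow> x \<in> carrier G \<and> y \<in> carrier G \<and> x \<prec> y
    \<and> (\<nexists>u. u \<in> carrier G \<and> x \<prec> u \<and> u \<prec> y)"

lemma covered_byI:
  assumes "x \<in> carrier G" "y \<in> carrier G" "x \<preceq> y" "x \<noteq> y"
    and "\<And>u. \<lbrakk>u \<in> carrier G; x \<preceq> u; u \<preceq> y\<rbrakk> \<Longrightarrow> u = x \<or> u = y"
  shows "covered_by x y"
  using assms unfolding covered_by_def strict_def by blast

lemma covered_byD:
  assumes "covered_by x y"
  shows "x \<in> carrier G" "y \<in> carrier G" "x \<preceq> y" "x \<noteq> y"
    and "\<And>u. \<lbrakk>u \<in> carrier G; x \<preceq> u; u \<preceq> y\<rbrakk> \<Longrightarrow> u = x \<or> u = y"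
  using assms unfolding covered_by_def strict_def by blast+

lemma covered_by_one_iff: "covered_by_one G (\<preceq>) c \<longleftrightarrow> covered_by c \<one>"
  by (simp add: covered_by_one_def covered_by_def)

lemma covered_by_rmult:
  assumes "covered_by x y" "z \<in> carrier G"
  shows "covered_by (x \<otimes> z) (y \<otimes> z)"
proof (rule covered_byI)
  note xy = covered_byD[OF assms(1)]
  show "x \<otimes> z \<preceq> y \<otimes> z" "x \<otimes> z \<noteq> y \<otimes> z"
    using xy assms(2) by (auto simp: le_rmult)
  fix u assume u: "u \<in> carrier G" "x \<otimes> z \<preceq> u" "u \<preceq> y \<otimes> z"
  have u_eq: "u = u \<otimes> inv z \<otimes> z"
    using u assms by (simp add: m_assoc)
  have "x \<preceq> u \<otimes> inv z" "u \<otimes> inv z \<preceq> y"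
    using u xy assms(2) u_eq le_rmult_iff[of x "u \<otimes> inv z" z] le_rmult_iff[of "u \<otimes> inv z" y z]
    by auto
  then have "u \<otimes> inv z = x \<or> u \<otimes> inv z = y"
    using xy u assms(2) by simp
  then show "u = x \<otimes> z \<or> u = y \<otimes> z"
    using u_eq by auto
qed (use assms covered_byD in simp_all)

end

locale modular_noetherian_right_lgroup = right_lgroup +
  fixes deg :: "'a \<Rightarrow> int"
  assumes modular_lattice: "modular_lattice (carrier G) (\<preceq>)"
    and noetherian: "noetherian (carrier G) (\<preceq>)"
    and degree_hom: "degree_hom G (\<preceq>) deg"
begin

lemma modular:
  assumes "x \<in> carrier G" "y \<in> carrier G" "z \<in> carrier G" "x \<preceq> z"
  shows "join x (meet y z) = meet (join x y) z"
  by (rule modular_lattice[unfolded modular_lattice_def, rule_format,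
        of x y z "meet y z" _ "join x y"])
    (use assms in \<open>simp_all add: is_sup_join is_inf_meet\<close>)

lemma wf_above:
  assumes "g \<in> carrier G"
  shows "wf {(a, b). a \<in> carrier G \<and> b \<in> carrier G \<and> g \<preceq> a \<and> g \<preceq> b \<and> a \<prec> b}"
  unfolding wf_iff_no_infinite_down_chain
proof
  assume "\<exists>f. \<forall>n. (f (Suc n), f n)
    \<in> {(a, b). a \<in> carrier G \<and> b \<in> carrier G \<and> g \<preceq> a \<and> g \<preceq> b \<and> a \<prec> b}"
  then obtain f where "\<forall>n. f n \<in> carrier G \<and> g \<preceq> f n \<and> f (Suc n) \<prec> f n"
    by auto
  with noetherian assms show False
    unfolding noetherian_def by blast
qed

lemma wf_below:
  assumes "g \<in> carrier G"
  shows "wf {(a, b). a \<in> carrier G \<and> b \<in> carrier G \<and> a \<preceq> g \<and> b \<preceq> g \<and> b \<prec> a}"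
  unfolding wf_iff_no_infinite_down_chain
proof
  assume "\<exists>f. \<forall>n. (f (Suc n), f n)
    \<in> {(a, b). a \<in> carrier G \<and> b \<in> carrier G \<and> a \<preceq> g \<and> b \<preceq> g \<and> b \<prec> a}"
  then obtain f where "\<forall>n. f n \<in> carrier G \<and> f n \<preceq> g \<and> f n \<prec> f (Suc n)"
    by auto
  with noetherian assms show False
    unfolding noetherian_def by blast
qed

lemma covered_by_exists:
  assumes "x \<in> carrier G" "y \<in> carrier G" "x \<preceq> y" "x \<noteq> y"
  obtains w where "covered_by x w" "w \<preceq> y"
proof -
  let ?A = "{w \<in> carrier G. x \<preceq> w \<and> x \<noteq> w \<and> w \<preceq> y}"
  let ?R = "{(a, b). a \<in> carrier G \<and> b \<in> carrier G \<and> x \<preceq> a \<and> x \<preceq> b \<and> a \<prec> b}"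
  have "y \<in> ?A"
    using assms by (simp add: le_refl)
  then obtain w where w: "w \<in> ?A" and min: "\<And>u. (u, w) \<in> ?R \<Longrightarrow> u \<notin> ?A"
    by (rule wfE_min[OF wf_above[OF assms(1)]]) blast
  have "covered_by x w"
  proof (rule covered_byI)
    fix u assume u: "u \<in> carrier G" "x \<preceq> u" "u \<preceq> w"
    show "u = x \<or> u = w"
      using min[of u] u w le_trans[of u w y] assms by (auto simp: strict_def)
  qed (use w assms in auto)
  with w show ?thesis
    using that by blast
qed

lemma covered_by_join:
  assumes "x \<in> carrier G" "y \<in> carrier G" "meet x y \<preceq> z" "covered_by z w" "w \<preceq> y"
  shows "covered_by (join z x) (join w x)"
proof (rule covered_byI)
  note zw = covered_byD[OF assms(4)]
  have carrier: "z \<in> carrier G" "w \<in> carrier G"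
    using zw by simp_all
  have "z \<preceq> join w x"
    using assms carrier le_trans[OF zw(3) join_upper1] by simp
  then show "join z x \<preceq> join w x"
    using assms carrier by (simp add: join_least join_upper2)
  have "meet x w \<preceq> meet x y"
    using assms carrier le_trans[OF meet_lower2 assms(5)] by (simp add: meet_greatest meet_lower1)
  then have "meet x w \<preceq> z"
    using assms carrier le_trans[of "meet x w" "meet x y" z] by simp
  then have "z = meet (join z x) w"
    using modular[of z x w] assms carrier zw by (simp add: join_absorb1)
  moreover have "w = meet (join w x) w"
    using carrier assms by (simp add: join_upper1 meet_absorb2)
  ultimately show "join z x \<noteq> join w x"
    using zw by metis
  fix u assume u: "u \<in> carrier G" "join z x \<preceq> u" "u \<preceq> join w x"
  have "z \<preceq> u" "x \<preceq> u"
    using u assms carrier le_trans[OF join_upper1 u(2)] le_trans[OF join_upper2 u(2)] by simp_all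
  then have "z \<preceq> meet u w" "meet u w \<preceq> w"
    using u carrier zw by (simp_all add: meet_greatest meet_lower2)
  then have "meet u w = z \<or> meet u w = w"
    using zw u carrier by simp
  then show "u = join z x \<or> u = join w x"
  proof
    assume "meet u w = z"
    have "join x (meet w u) = meet (join x w) u"
      using u carrier assms \<open>x \<preceq> u\<close> by (intro modular) auto
    also have "\<dots> = u"
      using u carrier assms by (simp add: join_commute meet_absorb2)
    finally show ?thesis
      using \<open>meet u w = z\<close> u carrier assms by (simp add: join_commute meet_commute)
  next
    assume "meet u w = w"
    then have "join w x \<preceq> u"
      using u carrier assms \<open>x \<preceq> u\<close> meet_lower1[of u w] by (simp add: join_least)
    then show ?thesis
      using u carrier assms le_antisym by simp
  qed
qed (use assms covered_byD in simp_all)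

lemma deg_mult: "x \<in> carrier G \<Longrightarrow> y \<in> carrier G \<Longrightarrow> deg (x \<otimes> y) = deg x + deg y"
  using degree_hom by (simp add: degree_hom_def)

lemma deg_one [simp]: "deg \<one> = 0"
  using deg_mult[of \<one> \<one>] by simp

lemma deg_lprod: "set xs \<subseteq> carrier G \<Longrightarrow> deg (lprod G xs) = (\<Sum>x\<leftarrow>xs. deg x)"
  by (induction xs) (simp_all add: deg_mult)

lemma deg_covered_by:
  assumes "covered_by x y"
  shows "deg x = deg y + 1"
proof -
  note xy = covered_byD[OF assms]
  let ?c = "x \<otimes> inv y"
  have "covered_by ?c \<one>"
    using covered_by_rmult[OF assms, of "inv y"] xy by simp
  then have "\<forall>a\<in>set [?c]. covered_by_one G (\<preceq>) a" "?c \<in> neg_cone G (\<preceq>)" "lprod G [?c] = ?c"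
    using covered_byD[of ?c \<one>] by (simp_all add: covered_by_one_iff neg_cone_def)
  then have "deg ?c = 1"
    using degree_hom unfolding degree_hom_def by fastforce
  moreover have "deg x = deg ?c + deg y"
    using xy deg_mult[of ?c y] by (simp add: m_assoc)
  ultimately show ?thesis
    by simp
qed

lemma deg_join_diff_const:
  assumes "x \<in> carrier G" "y \<in> carrier G" "z \<in> carrier G" "meet x y \<preceq> z" "z \<preceq> y"
  shows "deg (join z x) - deg z = deg (join y x) - deg y"
  using wf_below[OF assms(2)] assms(3-5)
proof (induction z rule: wf_induct_rule)
  case (less z)
  show ?case
  proof (cases "z = y")
    case False
    then obtain w where w: "covered_by z w" "w \<preceq> y"
      using covered_by_exists less.prems assms by blast
    note zw = covered_byD[OF w(1)]
    have "meet x y \<preceq> w"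
      using less.prems assms zw le_trans[of "meet x y" z w] by simp
    then have "deg (join w x) - deg w = deg (join y x) - deg y"
      using less.IH[of w] less.prems w zw by (simp add: strict_def)
    moreover have "deg (join z x) = deg (join w x) + 1"
      by (rule deg_covered_by, rule covered_by_join) (use assms less.prems w in auto)
    ultimately show ?thesis
      using deg_covered_by[OF w(1)] by simp
  qed simp
qed

lemma deg_join_meet:
  assumes "x \<in> carrier G" "y \<in> carrier G"
  shows "deg (join x y) + deg (meet x y) = deg x + deg y"
proof -
  have "deg (join (meet x y) x) - deg (meet x y) = deg (join y x) - deg y"
    using assms by (intro deg_join_diff_const) (simp_all add: le_refl meet_lower2)
  moreover have "join (meet x y) x = x"
    using assms by (simp add: join_absorb2 meet_lower1)
  ultimately show ?thesis
    using assms by (simp add: join_commute)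
qed

end

locale unital_right_lgroup = right_lgroup +
  fixes s :: 'a
  assumes strong_order_unit: "strong_order_unit G (\<preceq>) s"
begin

lemma unit_closed [simp]: "s \<in> carrier G"
  using strong_order_unit by (simp add: strong_order_unit_def)

lemma one_le_unit: "\<one> \<preceq> s"
  using strong_order_unit by (simp add: strong_order_unit_def strict_def)

lemma unit_join:
  assumes "x \<in> carrier G" "y \<in> carrier G"
  shows "s \<otimes> join x y = join (s \<otimes> x) (s \<otimes> y)"
proof -
  have "is_sup (\<preceq>) (carrier G) (s \<otimes> x) (s \<otimes> y) (s \<otimes> join x y)"
    using strong_order_unit assms is_sup_join unfolding strong_order_unit_def by blast
  then show ?thesis
    using assms by (simp add: is_sup_iff_eq_join)
qed

lemma unit_meet:
  assumes "x \<in> carrier G" "y \<in> carrier G"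
  shows "s \<otimes> meet x y = meet (s \<otimes> x) (s \<otimes> y)"
proof -
  have "is_inf (\<preceq>) (carrier G) (s \<otimes> x) (s \<otimes> y) (s \<otimes> meet x y)"
    using strong_order_unit assms is_inf_meet unfolding strong_order_unit_def by blast
  then show ?thesis
    using assms by (simp add: is_inf_iff_eq_meet)
qed

lemma unit_le_iff: "x \<in> carrier G \<Longrightarrow> y \<in> carrier G \<Longrightarrow> s \<otimes> x \<preceq> s \<otimes> y \<longleftrightarrow> x \<preceq> y"
  by (simp add: le_iff_join unit_join[symmetric])

lemma inv_unit_le_iff: "x \<in> carrier G \<Longrightarrow> y \<in> carrier G \<Longrightarrow> inv s \<otimes> x \<preceq> inv s \<otimes> y \<longleftrightarrow> x \<preceq> y"
  using unit_le_iff[of "inv s \<otimes> x" "inv s \<otimes> y"] by (simp add: m_assoc[symmetric])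

lemma le_unit_mult: "x \<in> carrier G \<Longrightarrow> x \<preceq> s \<otimes> x"
  using le_rmult[OF one_le_unit, of x] by simp

lemma le_unit_pow_mult: "x \<in> carrier G \<Longrightarrow> x \<preceq> s [^] (n::nat) \<otimes> x"
proof (induction n arbitrary: x)
  case (Suc n)
  then have "s \<otimes> x \<preceq> s [^] n \<otimes> (s \<otimes> x)"
    by simp
  then show ?case
    using Suc.prems le_unit_mult[of x] le_trans[of x "s \<otimes> x"] by (simp add: m_assoc)
qed (simp add: le_refl)

lemma unit_pow_Suc_mult: "y \<in> carrier G \<Longrightarrow> s [^] Suc n \<otimes> y = s \<otimes> (s [^] n \<otimes> y)"
  unfolding nat_pow_Suc2[OF unit_closed] by (simp add: m_assoc)

definition simple :: "'a \<Rightarrow> bool"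
  where "simple x \<longleftrightarrow> x \<in> carrier G \<and> inv s \<preceq> x \<and> x \<preceq> \<one>"

definition right_normal_pair :: "'a \<Rightarrow> 'a \<Rightarrow> bool"
  where "right_normal_pair a b \<longleftrightarrow>
    \<not> (\<exists>h\<in>neg_cone G (\<preceq>). \<exists>h'\<in>neg_cone G (\<preceq>). h \<noteq> \<one> \<and> h' \<otimes> h = b \<and> simple (h \<otimes> a))"

definition left_normal_pair :: "'a \<Rightarrow> 'a \<Rightarrow> bool"
  where "left_normal_pair a b \<longleftrightarrow>
    \<not> (\<exists>h\<in>neg_cone G (\<preceq>). \<exists>h'\<in>neg_cone G (\<preceq>). h \<noteq> \<one> \<and> h \<otimes> h' = b \<and> simple (a \<otimes> h))"

definition right_normal :: "'a list \<Rightarrow> bool"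
  where "right_normal gs \<longleftrightarrow> (\<forall>x\<in>set gs. simple x) \<and> successively right_normal_pair gs"

definition left_normal :: "'a list \<Rightarrow> bool"
  where "left_normal hs \<longleftrightarrow> (\<forall>x\<in>set hs. simple x) \<and> successively left_normal_pair hs"

lemma simple_iff_ointerval: "simple x \<longleftrightarrow> x \<in> ointerval G (\<preceq>) (inv s) \<one>"
  by (simp add: simple_def ointerval_def)

lemma right_normal_factD:
  assumes "right_normal_fact G (\<preceq>) s g gs"
  shows "right_normal gs" "g = lprod G (rev gs)"
  using assms unfolding right_normal_fact_def right_normal_def right_normal_pair_def
    successively_conv_nth simple_iff_ointerval by blast+

lemma left_normal_factD:
  assumes "left_normal_fact G (\<preceq>) s g hs"
  shows "left_normal hs" "g = lprod G hs"
  using assms unfolding left_normal_fact_def left_normal_def left_normal_pair_def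
    successively_conv_nth simple_iff_ointerval by blast+

lemma simples_carrier: "\<forall>x\<in>set xs. simple x \<Longrightarrow> set xs \<subseteq> carrier G"
  by (auto simp: simple_def)

lemma lprod_simples_le_one: "\<forall>x\<in>set xs. simple x \<Longrightarrow> lprod G xs \<preceq> \<one>"
  using lprod_neg_cone[of xs] by (auto simp: simple_def neg_cone_def)

lemma left_normal_drop:
  assumes "left_normal hs"
  shows "left_normal (drop i hs)"
proof -
  have "successively left_normal_pair (take i hs @ drop i hs)"
    using assms by (simp add: left_normal_def)
  then have "successively left_normal_pair (drop i hs)"
    by (simp only: successively_append_iff)
  then show ?thesis
    using assms by (auto simp: left_normal_def dest: in_set_dropD)
qed

text \<open>\<open>d = b a \<or> s\<^sup>-\<^sup>1\<close> is simple and below \<open>a\<close>, so \<open>h = d a\<^sup>-\<^sup>1\<close> is a right divisor of \<open>b\<close> in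
  \<open>G\<^sup>-\<close> with \<open>h a\<close> simple; normality forces \<open>h = e\<close>.\<close>

lemma right_normal_pair_join:
  assumes "simple a" "simple b" "right_normal_pair a b"
  shows "join (b \<otimes> a) (inv s) = a"
proof -
  define d where "d = join (b \<otimes> a) (inv s)"
  define h where "h = d \<otimes> inv a"
  have carrier: "a \<in> carrier G" "b \<in> carrier G" "d \<in> carrier G" "h \<in> carrier G"
    using assms by (simp_all add: simple_def d_def h_def)
  have d_eq: "d = h \<otimes> a"
    using carrier by (simp add: h_def m_assoc)
  have "b \<otimes> a \<preceq> \<one> \<otimes> a"
    by (rule le_rmult) (use assms carrier in \<open>simp_all add: simple_def\<close>)
  then have "d \<preceq> a"
    using assms carrier by (simp add: d_def simple_def join_least)
  then have h_neg: "h \<in> neg_cone G (\<preceq>)"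
    using carrier le_iff_le_one[of d a] by (simp add: h_def neg_cone_def)
  have "b \<otimes> a \<preceq> h \<otimes> a"
    using carrier d_eq join_upper1[of "b \<otimes> a" "inv s"] by (simp add: d_def)
  then have "b \<otimes> inv h \<in> neg_cone G (\<preceq>)"
    using carrier le_rmult_iff[of b h a] le_iff_le_one[of b h] by (simp add: neg_cone_def)
  moreover have "b \<otimes> inv h \<otimes> h = b"
    using carrier by (simp add: m_assoc)
  moreover have "simple (h \<otimes> a)"
    using assms carrier \<open>d \<preceq> a\<close> d_eq le_trans[of d a \<one>] join_upper2[of "b \<otimes> a" "inv s"]
    by (simp add: simple_def d_def)
  ultimately have "h = \<one>"
    using assms(3) h_neg unfolding right_normal_pair_def by blast
  then show ?thesis
    using carrier d_eq by (simp add: d_def)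
qed

lemma right_normal_join_inv_unit:
  assumes "right_normal (a # gs)"
  shows "join (lprod G (rev (a # gs))) (inv s) = a"
  using assms
proof (induction gs arbitrary: a)
  case Nil
  then show ?case
    by (simp add: right_normal_def simple_def join_absorb1)
next
  case (Cons b gs)
  let ?p = "lprod G (rev (b # gs))"
  have a: "simple a" "right_normal_pair a b" and bgs: "right_normal (b # gs)"
    using Cons.prems by (simp_all add: right_normal_def)
  have carrier: "a \<in> carrier G" "set (rev (b # gs)) \<subseteq> carrier G"
    using Cons.prems simples_carrier by (auto simp: right_normal_def simple_def)
  have "inv s \<otimes> a \<preceq> inv s"
    using a carrier inv_unit_le_iff[of a \<one>] by (simp add: simple_def)
  then have "join (?p \<otimes> a) (inv s) = join (join ?p (inv s) \<otimes> a) (inv s)"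
    using carrier by (simp add: join_rmult_join)
  also have "\<dots> = a"
    using Cons.IH[OF bgs] bgs a right_normal_pair_join by (simp add: right_normal_def)
  finally show ?case
    using carrier by (simp add: lprod_append m_assoc)
qed

lemma join_one_unit_pow_Suc:
  assumes "p \<in> carrier G" "q \<in> carrier G" "a \<in> carrier G"
    and "join (s [^] i \<otimes> p) \<one> = s [^] i \<otimes> q" "join (p \<otimes> a) (inv s) = a"
  shows "join (s [^] Suc i \<otimes> (p \<otimes> a)) \<one> = s [^] Suc i \<otimes> (q \<otimes> a)"
proof -
  let ?x = "s \<otimes> (s [^] i \<otimes> (p \<otimes> a))"
  have sa: "s \<otimes> a = join (s \<otimes> (p \<otimes> a)) \<one>"
    using assms unit_join[of "p \<otimes> a" "inv s"] by simp
  have "s \<otimes> (s [^] i \<otimes> (q \<otimes> a)) = s \<otimes> (join (s [^] i \<otimes> p) \<one> \<otimes> a)"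
    using assms by (simp add: m_assoc)
  also have "\<dots> = join ?x (s \<otimes> a)"
    using assms(1-3) by (simp add: unit_join m_assoc flip: join_rmult)
  also have "\<dots> = join (join ?x (s \<otimes> (p \<otimes> a))) \<one>"
    using assms sa by (simp add: join_assoc)
  also have "join ?x (s \<otimes> (p \<otimes> a)) = ?x"
    using assms le_unit_pow_mult[of "p \<otimes> a" i] by (simp add: unit_le_iff join_absorb1)
  finally show ?thesis
    using assms by (simp only: unit_pow_Suc_mult m_closed)
qed

lemma right_normal_join_one:
  assumes "right_normal gs" "i \<le> length gs"
  shows "join (s [^] i \<otimes> lprod G (rev gs)) \<one> = s [^] i \<otimes> lprod G (rev (take i gs))"
  using assms
proof (induction i arbitrary: gs)
  case 0
  then show ?case
    using lprod_simples_le_one[of "rev gs"] simples_carrier[of "rev gs"]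
    by (simp add: right_normal_def join_absorb2)
next
  case (Suc i)
  then obtain a gs' where gs: "gs = a # gs'"
    by (cases gs) auto
  define p where "p = lprod G (rev gs')"
  define q where "q = lprod G (rev (take i gs'))"
  have gs': "right_normal gs'" "i \<le> length gs'"
    using Suc.prems by (auto simp: gs right_normal_def successively_Cons)
  have sets: "set (rev gs') \<subseteq> carrier G" "set (rev (take i gs')) \<subseteq> carrier G"
    using gs' simples_carrier set_take_subset[of i gs'] by (auto simp: right_normal_def)
  then have carrier: "p \<in> carrier G" "q \<in> carrier G" "a \<in> carrier G"
    using Suc.prems by (simp_all add: gs right_normal_def simple_def p_def q_def)
  have IH: "join (s [^] i \<otimes> p) \<one> = s [^] i \<otimes> q"
    using Suc.IH gs' by (simp add: p_def q_def)
  have first: "join (p \<otimes> a) (inv s) = a"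
    using right_normal_join_inv_unit[of a gs'] Suc.prems sets carrier
    by (simp add: gs p_def lprod_append)
  have "lprod G (rev gs) = p \<otimes> a" "lprod G (rev (take (Suc i) gs)) = q \<otimes> a"
    using sets carrier by (simp_all add: gs p_def q_def lprod_append)
  then show ?case
    using join_one_unit_pow_Suc[OF carrier IH first] by simp
qed

text \<open>Dually, \<open>m = s a b \<and> e\<close> lies between \<open>b\<close> and \<open>e\<close>, so \<open>h = b m\<^sup>-\<^sup>1\<close> is a left divisor of
  \<open>b\<close> in \<open>G\<^sup>-\<close> with \<open>a h\<close> simple; normality forces \<open>h = e\<close>.\<close>

lemma left_normal_pair_meet:
  assumes "simple a" "simple b" "left_normal_pair a b"
  shows "meet (s \<otimes> (a \<otimes> b)) \<one> = b"
proof -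
  define m where "m = meet (s \<otimes> (a \<otimes> b)) \<one>"
  define h where "h = b \<otimes> inv m"
  have carrier: "a \<in> carrier G" "b \<in> carrier G" "m \<in> carrier G" "h \<in> carrier G"
    using assms by (simp_all add: simple_def m_def h_def)
  have b_eq: "b = h \<otimes> m"
    using carrier by (simp add: h_def m_assoc)
  have "\<one> \<preceq> s \<otimes> a"
    using assms carrier unit_le_iff[of "inv s" a] by (simp add: simple_def)
  then have "b \<preceq> s \<otimes> (a \<otimes> b)"
    using carrier le_rmult[of \<one> "s \<otimes> a" b] by (simp add: m_assoc)
  then have "b \<preceq> m"
    using assms carrier by (simp add: m_def simple_def meet_greatest m_assoc)
  then have "h \<in> neg_cone G (\<preceq>)"
    using carrier le_iff_le_one[of b m] by (simp add: h_def neg_cone_def)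
  moreover have "m \<in> neg_cone G (\<preceq>)"
    using carrier by (simp add: m_def neg_cone_def meet_lower2)
  moreover have "simple (a \<otimes> h)"
  proof -
    have "a \<otimes> b \<preceq> \<one> \<otimes> b"
      by (rule le_rmult) (use assms carrier in \<open>simp_all add: simple_def\<close>)
    then have "a \<otimes> b \<preceq> m"
      using assms carrier le_trans[of "a \<otimes> b" b \<one>] le_unit_mult[of "a \<otimes> b"]
      by (simp add: m_def simple_def meet_greatest)
    moreover have "inv s \<otimes> m \<preceq> a \<otimes> b"
      using carrier inv_unit_le_iff[of m "s \<otimes> (a \<otimes> b)"] meet_lower1[of "s \<otimes> (a \<otimes> b)" \<one>]
      by (simp add: m_def m_assoc[symmetric])
    ultimately show ?thesis
      using carrier le_iff_le_one[of "a \<otimes> b" m] le_rmult_iff[of "inv s \<otimes> m" "a \<otimes> b" "inv m"]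
      by (simp add: simple_def h_def m_assoc)
  qed
  ultimately have "h = \<one>"
    using assms(3) b_eq unfolding left_normal_pair_def by blast
  then show ?thesis
    using carrier b_eq unfolding m_def[symmetric] by simp
qed

lemma left_normal_meet_one:
  assumes "left_normal hs"
  shows "meet (s \<otimes> lprod G hs) \<one> = lprod G (tl hs)"
  using assms
proof (induction hs)
  case Nil
  then show ?case
    using one_le_unit by (simp add: meet_absorb2)
next
  case (Cons a hs)
  have a: "simple a" and hs: "left_normal hs"
    using Cons.prems by (auto simp: left_normal_def successively_Cons)
  show ?case
  proof (cases hs)
    case Nil
    then show ?thesis
      using a unit_le_iff[of "inv s" a] by (simp add: simple_def meet_absorb2)
  next
    case (Cons b hs')
    let ?p = "lprod G hs'"
    have b: "simple b" "left_normal_pair a b"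
      using Cons.prems \<open>hs = b # hs'\<close> by (simp_all add: left_normal_def)
    have carrier: "a \<in> carrier G" "b \<in> carrier G" "?p \<in> carrier G"
      using a b hs simples_carrier[of hs'] by (auto simp: Cons simple_def left_normal_def)
    have "a \<otimes> (b \<otimes> ?p) \<preceq> \<one> \<otimes> (b \<otimes> ?p)"
      by (rule le_rmult) (use a carrier in \<open>simp_all add: simple_def\<close>)
    then have "s \<otimes> (a \<otimes> b) \<otimes> ?p \<preceq> s \<otimes> (b \<otimes> ?p)"
      using carrier unit_le_iff by (simp add: m_assoc)
    then have "meet (s \<otimes> (a \<otimes> b) \<otimes> ?p) \<one> = meet (s \<otimes> (a \<otimes> b)) \<one> \<otimes> ?p"
      using carrier Cons.IH hs by (intro meet_one_rmult) (simp_all add: Cons)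
    then show ?thesis
      using carrier a b left_normal_pair_meet by (simp add: Cons m_assoc)
  qed
qed

lemma left_normal_meet_one_pow:
  assumes "left_normal hs"
  shows "meet (s [^] (i::nat) \<otimes> lprod G hs) \<one> = lprod G (drop i hs)"
proof (induction i)
  case 0
  then show ?case
    using assms lprod_simples_le_one[of hs] simples_carrier[of hs]
    by (simp add: left_normal_def meet_absorb1)
next
  case (Suc i)
  define x where "x = s [^] i \<otimes> lprod G hs"
  have "lprod G hs \<in> carrier G"
    using assms simples_carrier by (simp add: left_normal_def)
  then have carrier: "x \<in> carrier G" and pow: "s [^] Suc i \<otimes> lprod G hs = s \<otimes> x"
    by (simp_all only: x_def unit_pow_Suc_mult nat_pow_closed unit_closed m_closed)
  have "meet (s \<otimes> x) \<one> = meet (meet (s \<otimes> x) s) \<one>"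
    using carrier one_le_unit by (simp add: meet_assoc meet_absorb2)
  also have "meet (s \<otimes> x) s = s \<otimes> lprod G (drop i hs)"
    using carrier unit_meet[of x \<one>] Suc.IH by (simp add: x_def)
  also have "meet (s \<otimes> lprod G (drop i hs)) \<one> = lprod G (drop (Suc i) hs)"
    using left_normal_meet_one[OF left_normal_drop[OF assms]] by (simp add: drop_Suc tl_drop)
  finally show ?case
    unfolding pow .
qed

end

locale modular_noetherian_unital_right_lgroup =
  modular_noetherian_right_lgroup + unital_right_lgroup
begin

lemma deg_prefix_right_normal_eq_left_normal:
  assumes "right_normal gs" "left_normal hs" "lprod G (rev gs) = lprod G hs" "i \<le> length gs"
  shows "(\<Sum>x\<leftarrow>take i gs. deg x) = (\<Sum>x\<leftarrow>take i hs. deg x)"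
proof -
  define x where "x = s [^] i \<otimes> lprod G hs"
  have "set gs \<subseteq> carrier G" "set hs \<subseteq> carrier G"
    using assms simples_carrier by (simp_all add: right_normal_def left_normal_def)
  then have parts: "set (take i gs) \<subseteq> carrier G" "set (take i hs) \<subseteq> carrier G"
    "set (drop i hs) \<subseteq> carrier G"
    by (meson order_trans set_take_subset set_drop_subset)+
  have "join x \<one> = s [^] i \<otimes> lprod G (rev (take i gs))"
    using right_normal_join_one[OF assms(1,4)] assms(3) by (simp add: x_def)
  moreover have "meet x \<one> = lprod G (drop i hs)"
    using left_normal_meet_one_pow[OF assms(2)] by (simp add: x_def)
  moreover have "lprod G hs = lprod G (take i hs) \<otimes> lprod G (drop i hs)"
    using parts lprod_append[of "take i hs" "drop i hs"] by simp
  ultimately show ?thesis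
    using parts deg_join_meet[of x \<one>]
    by (simp add: x_def deg_mult deg_lprod sum_list_rev flip: rev_map)
qed

lemma deg_nth_left_normal_eq_right_normal:
  assumes "right_normal gs" "left_normal hs" "lprod G (rev gs) = lprod G hs"
    and "length hs = length gs" "i < length gs"
  shows "deg (hs ! i) = deg (gs ! i)"
  using assms deg_prefix_right_normal_eq_left_normal[of gs hs i]
    deg_prefix_right_normal_eq_left_normal[of gs hs "Suc i"]
  by (simp add: take_Suc_conv_app_nth)

end

theorem mainTheorem6:
  fixes G :: "('a, 'b) monoid_scheme" and leq :: "'a \<Rightarrow> 'a \<Rightarrow> bool"
    and s g :: 'a and deg :: "'a \<Rightarrow> int" and gs hs :: "'a list"
  assumes "right_l_group G leq"
    and "modular_lattice (carrier G) leq"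
    and "noetherian (carrier G) leq"
    and "strong_order_unit G leq s"
    and "degree_hom G leq deg"
    and "g \<in> neg_cone G leq"
    and "right_normal_fact G leq s g gs"
    and "left_normal_fact G leq s g hs"
    and "length hs = length gs"
  shows "\<forall>i < length gs. deg (hs ! i) = deg (gs ! i)"
proof -
  interpret modular_noetherian_unital_right_lgroup G leq deg s
    using assms(1-5) by unfold_locales
  from assms(7) have "right_normal gs" "g = lprod G (rev gs)"
    by (rule right_normal_factD)+
  moreover from assms(8) have "left_normal hs" "g = lprod G hs"
    by (rule left_normal_factD)+
  ultimately show ?thesis
    using assms(9) deg_nth_left_normal_eq_right_normal by auto
qed

end
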